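(* Let $n\in\mathbb{N}$, $\sigma\in[1/n,1]$, $\varepsilon\in(0,1)$, and let $q$ be an $n$-arm bandit with expected utilities vector $u\in[0,1]^n$. Let $\tilde u\in[0,1]^n$ be an arbitrary vector (the message received by the verifier of Protocol 1). Suppose there exists a $\sigma$-smooth strategy $\pi$ with $|\pi\cdot u-\pi\cdot\tilde u|\ge\varepsilon/2$. Then the verifier of Protocol 1, run on $\tilde u$ with oracle access to $\mathcal{O}_q$, rejects with probability at least $2/3$.
   Context: An $n$-arm bandit is a vector $q=(q_1,\dots,q_n)$ of distributions on $[0,1]$; its oracle $\mathcal{O}_q$ returns, on query ("pull") $i$, an independent sample from $q_i$; $u_i=\mathbb{E}_{x\sim q_i}[x]$. A strategy $\pi$ is a distribution on $[n]$ with $\pi\cdot u=\sum_i\pi_iu_i$; it is $\sigma$-smooth if $\pi_i\le\sigma$ for all $i$. Protocol 1 (parameters $n,\sigma,\varepsilon$): Let $L=\log_4(1/\varepsilon)+2$ and $B=\{0,1,\dots,\lceil\log_4(1/\varepsilon)\rceil\}$. For $b\in B$ let $\varepsilon_b=\varepsilon\cdot4^b$, $a_b=\lceil 4^b\cdot 4n\sigma\cdot L\cdot\ln 6\rceil$ and $m_b=\lceil 128\ln(12\,L\,a_b)/\varepsilon_b^2\rceil$. The honest prover pulls each arm $i\in[n]$ exactly $k_P=\lceil128\ln(12n/\varepsilon)/\varepsilon^2\rceil$ times and sends the vector $\tilde u$ of empirical averages. The verifier receives $\tilde u\in[0,1]^n$; for each $b\in B$ and each $t\in[a_b]$, it samples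 $i_{b,t}$ uniformly from $[n]$ (independently), pulls arm $i_{b,t}$ exactly $m_b$ times, lets $\hat u_{i_{b,t}}$ be the empirical average, and rejects (terminating) if $|\tilde u_{i_{b,t}}-\hat u_{i_{b,t}}|>\varepsilon_b/8$. If it never rejects, it outputs the strategy $\pi_V$ computed from $\tilde u$ as follows: sort indices $i_1,\dots,i_n$ so that $\tilde u_{i_1}\ge\dots\ge\tilde u_{i_n}$, set $\pi_{i_j}=\sigma$ for $j\le\lfloor1/\sigma\rfloor$, $\pi_{i_j}=1-\sigma\lfloor1/\sigma\rfloor$ for $j=\lfloor1/\sigma\rfloor+1$, and $\pi_{i_j}=0$ otherwise. *)

theory Defs
  imports "HOL-Probability.Probability"
begin

text \<open>Arms are indexed by 0..<n. A bandit is a family q of probability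
measures on the Borel reals, each supported on [0,1].\<close>

definition is_bandit :: "nat \<Rightarrow> (nat \<Rightarrow> real measure) \<Rightarrow> bool" where
  "is_bandit n q \<longleftrightarrow> (\<forall>i<n. prob_space (q i) \<and> sets (q i) = sets borel
      \<and> measure (q i) {0..1} = 1)"

definition smooth_strategy :: "nat \<Rightarrow> real \<Rightarrow> (nat \<Rightarrow> real) \<Rightarrow> bool" where
  "smooth_strategy n \<sigma> \<pi> \<longleftrightarrow> (\<forall>i<n. 0 \<le> \<pi> i \<and> \<pi> i \<le> \<sigma>) \<and> (\<Sum>i<n. \<pi> i) = 1"

definition dotp :: "nat \<Rightarrow> (nat \<Rightarrow> real) \<Rightarrow> (nat \<Rightarrow> real) \<Rightarrow> real" where
  "dotp n \<pi> v = (\<Sum>i<n. \<pi> i * v i)"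

definition P1_L :: "real \<Rightarrow> real" where
  "P1_L \<epsilon> = log 4 (1/\<epsilon>) + 2"

definition P1_B :: "real \<Rightarrow> nat set" where
  "P1_B \<epsilon> = {0..nat \<lceil>log 4 (1/\<epsilon>)\<rceil>}"

definition P1_eps :: "real \<Rightarrow> nat \<Rightarrow> real" where
  "P1_eps \<epsilon> b = \<epsilon> * 4 ^ b"

definition P1_a :: "nat \<Rightarrow> real \<Rightarrow> real \<Rightarrow> nat \<Rightarrow> nat" where
  "P1_a n \<sigma> \<epsilon> b = nat \<lceil>4 ^ b * 4 * real n * \<sigma> * P1_L \<epsilon> * ln 6\<rceil>"

definition P1_m :: "nat \<Rightarrow> real \<Rightarrow> real \<Rightarrow> nat \<Rightarrow> nat" where
  "P1_m n \<sigma> \<epsilon> b =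
     nat \<lceil>128 * ln (12 * P1_L \<epsilon> * real (P1_a n \<sigma> \<epsilon> b)) / (P1_eps \<epsilon> b)\<^sup>2\<rceil>"

definition P1_tests :: "nat \<Rightarrow> real \<Rightarrow> real \<Rightarrow> (nat \<times> nat) set" where
  "P1_tests n \<sigma> \<epsilon> = {(b, t). b \<in> P1_B \<epsilon> \<and> t \<in> {1..P1_a n \<sigma> \<epsilon> b}}"

definition test_measure :: "nat \<Rightarrow> (nat \<Rightarrow> real measure) \<Rightarrow> nat \<Rightarrow> (nat \<times> (nat \<Rightarrow> real)) measure" where
  "test_measure n q m =
     measure_pmf (pmf_of_set {..<n}) \<bind>
       (\<lambda>i. distr (PiM {..<m} (\<lambda>_. q i))
               (count_space UNIV \<Otimes>\<^sub>M PiM {..<m} (\<lambda>_. borel)) (\<lambda>xs. (i, xs)))"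

definition verifier_measure :: "nat \<Rightarrow> real \<Rightarrow> real \<Rightarrow> (nat \<Rightarrow> real measure)
     \<Rightarrow> ((nat \<times> nat) \<Rightarrow> (nat \<times> (nat \<Rightarrow> real))) measure" where
  "verifier_measure n \<sigma> \<epsilon> q =
     PiM (P1_tests n \<sigma> \<epsilon>) (\<lambda>(b, t). test_measure n q (P1_m n \<sigma> \<epsilon> b))"

definition test_fails :: "(nat \<Rightarrow> real) \<Rightarrow> real \<Rightarrow> nat \<Rightarrow> nat \<times> (nat \<Rightarrow> real) \<Rightarrow> bool" where
  "test_fails ut thr m r = (case r of (i, xs) \<Rightarrow> \<bar>ut i - (\<Sum>j<m. xs j) / real m\<bar> > thr)"

text \<open>The verifier rejects iff some test fails (early termination does not
change the rejection probability).\<close>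

definition verifier_rejects_event :: "nat \<Rightarrow> real \<Rightarrow> real \<Rightarrow> (nat \<Rightarrow> real measure) \<Rightarrow> (nat \<Rightarrow> real)
     \<Rightarrow> ((nat \<times> nat) \<Rightarrow> (nat \<times> (nat \<Rightarrow> real))) set" where
  "verifier_rejects_event n \<sigma> \<epsilon> q ut =
     {\<omega> \<in> space (verifier_measure n \<sigma> \<epsilon> q).
        \<exists>(b, t) \<in> P1_tests n \<sigma> \<epsilon>.
          test_fails ut (P1_eps \<epsilon> b / 8) (P1_m n \<sigma> \<epsilon> b) (\<omega> (b, t))}"

end

theory Submission
  imports Defs
begin

text \<open>
  Write d i = |u i - ut i|. Splitting d i along the levels eps_b = eps * 4^b turns the gap
  (SUM i. pi i * d i) >= eps/2 of a sigma-smooth strategy pi into a level b at which at least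
  1/(4^(b+1) * sigma * L) arms have d i > eps_b/4, since otherwise every level would contribute
  less than eps/(4L) to the sum. A test of level b picks such an arm with probability
  p >= 1/(4^(b+1) * sigma * L * n), and then, by Hoeffding's inequality for its m_b samples, fails
  except with probability at most 1/8. The a_b >= 4^(b+1) * n * sigma * L * ln 6 tests of level b
  are independent, so all of them pass with probability at most
  (1 - 7p/8)^(a_b) <= exp (-7/8 * ln 6) <= 1/3.
\<close>

section \<open>Independent sampling\<close>

lemma bind_measure_pmf_cong:
  assumes "\<And>x. x \<in> set_pmf p \<Longrightarrow> f x = g x"
    and "\<And>x. sets (f x) = sets N" and "\<And>x. sets (g x) = sets N"
  shows "measure_pmf p \<bind> f = measure_pmf p \<bind> g"
proof -
  have "emeasure (measure_pmf p) (f -` A \<inter> space (measure_pmf p))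
      = emeasure (measure_pmf p) (g -` A \<inter> space (measure_pmf p))" for A
  proof -
    have "f -` A \<inter> set_pmf p = g -` A \<inter> set_pmf p"
      using assms(1) by auto
    then show ?thesis
      by (metis emeasure_Int_set_pmf inf_top.right_neutral space_measure_pmf)
  qed
  moreover have "subprob_algebra (f x) = subprob_algebra (g x)" for x
    using assms(2,3) by (metis subprob_algebra_cong)
  ultimately show ?thesis
    unfolding bind_def distr_def by simp
qed

lemma (in product_prob_space) indep_vars_components:
  assumes "finite I" "I \<noteq> {}"
  shows "prob_space.indep_vars (PiM I M) M (\<lambda>i x. x i) I"
proof (subst indep_vars_iff_distr_eq_PiM')
  have "PiM I (\<lambda>i. distr (PiM I M) (M i) (\<lambda>x. x i)) = PiM I M"
    by (intro PiM_cong) (simp_all add: PiM_component)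
  then show "distr (PiM I M) (PiM I M) (\<lambda>x. \<lambda>i\<in>I. x i) = PiM I (\<lambda>i. distr (PiM I M) (M i) (\<lambda>x. x i))"
    using distr_PiM_restrict_finite[OF assms(1) order_refl] by simp
qed (use assms in auto)

lemma (in product_prob_space)
  assumes "finite J" "J \<subseteq> I" "\<And>j. j \<in> J \<Longrightarrow> M j = N" "A \<in> sets N"
  shows all_components_in_sets: "{\<omega> \<in> space (PiM I M). \<forall>j\<in>J. \<omega> j \<in> A} \<in> sets (PiM I M)"
    and prob_all_components_in: "prob {\<omega> \<in> space (PiM I M). \<forall>j\<in>J. \<omega> j \<in> A} = measure N A ^ card J"
proof -
  have emb: "{\<omega> \<in> space (PiM I M). \<forall>j\<in>J. \<omega> j \<in> A} = prod_emb I M J (Pi\<^sub>E J (\<lambda>_. A))"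
    using assms(2) by (auto simp: prod_emb_def space_PiM)
  then show "{\<omega> \<in> space (PiM I M). \<forall>j\<in>J. \<omega> j \<in> A} \<in> sets (PiM I M)"
    using assms by (auto intro!: sets_PiM_I)
  have "emeasure (PiM I M) (prod_emb I M J (Pi\<^sub>E J (\<lambda>_. A))) = (\<Prod>j\<in>J. emeasure (M j) A)"
    using assms by (simp add: emeasure_PiM_emb)
  also have "\<dots> = (\<Prod>j\<in>J. ennreal (measure N A))"
    by (intro prod.cong refl) (metis assms(3) M.emeasure_eq_measure)
  also have "\<dots> = ennreal (measure N A ^ card J)"
    by (simp add: ennreal_power)
  finally show "prob {\<omega> \<in> space (PiM I M). \<forall>j\<in>J. \<omega> j \<in> A} = measure N A ^ card J"
    by (simp add: emb measure_def)
qed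

lemma hoeffding_empirical_mean:
  fixes Q :: "real measure" and m :: nat and t :: real
  assumes Q: "prob_space Q" "sets Q = sets borel" "measure Q {0..1} = 1"
    and m: "0 < m" and t: "0 \<le> t"
  shows "measure (PiM {..<m} (\<lambda>_. Q))
      {xs \<in> space (PiM {..<m} (\<lambda>_. Q)). \<bar>(\<Sum>j<m. xs j) / real m - (\<integral>x. x \<partial>Q)\<bar> \<ge> t}
    \<le> 2 * exp (- 2 * real m * t\<^sup>2)"
proof -
  let ?P = "PiM {..<m} (\<lambda>_. Q)"
  interpret PP: product_prob_space "\<lambda>_. Q" "{..<m}"
    using Q(1) by (rule product_prob_spaceI)
  have component: "distr ?P borel (\<lambda>xs. xs j) = Q" if "j < m" for j
  proof -
    have "distr ?P borel (\<lambda>xs. xs j) = distr ?P Q (\<lambda>xs. xs j)"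
      using Q(2) by (intro distr_cong) auto
    then show ?thesis
      using PP.PiM_component[of j] that by simp
  qed
  have component_measurable: "(\<lambda>xs. xs j) \<in> borel_measurable ?P" if "j < m" for j
    using that by (simp add: measurable_cong_sets[OF refl Q(2), symmetric])
  \<comment> \<open>Established before the interpretation below: there the simp rule expectation_X rewrites the
     expectation of the reference variable xs 0 to itself, and the simplifier loops.\<close>
  have "(\<integral>xs. xs 0 \<partial>?P) = (\<integral>x. x \<partial>distr ?P borel (\<lambda>xs. xs 0))"
    using component_measurable[OF m] by (subst integral_distr) auto
  then have mean: "(\<integral>xs. xs 0 \<partial>?P) = (\<integral>x. x \<partial>Q)"
    using component[OF m] by simp
  have nonempty: "{..<m} \<noteq> {}"
    using m by auto
  then have "PP.indep_vars (\<lambda>_. Q) (\<lambda>j xs. xs j) {..<m}"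
    by (rule PP.indep_vars_components[OF finite_lessThan])
  then have "PP.indep_vars (\<lambda>_. borel) (\<lambda>j xs. xs j) {..<m}"
    unfolding PP.indep_vars_def measurable_cong_sets[OF refl Q(2)] Q(2) .
  moreover have "AE x in Q. x \<in> {0..1}"
    using prob_space.AE_in_set_eq_1[OF Q(1), of "{0..1}"] Q(2,3) by simp
  then have "AE xs in ?P. xs 0 \<in> {0..1}"
    using m by (intro PP.AE_component) auto
  ultimately interpret H: Hoeffding_ineq_iid ?P "{..<m}" "\<lambda>j xs. xs j" "\<lambda>xs. xs 0" 0 1
      "\<integral>xs. xs 0 \<partial>?P"
  proof unfold_locales
    show "finite {..<m}"
      by simp
    show "distr ?P borel (\<lambda>xs. xs j) = distr ?P borel (\<lambda>xs. xs 0)" if "j \<in> {..<m}" for j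
      using component that m by simp
  qed (use component_measurable m in auto)
  show ?thesis
    using H.Hoeffding_ineq_abs_ge'[OF t _ nonempty] m unfolding mean card_lessThan by simp
qed

lemma bandit_mean_in_unit:
  assumes "is_bandit n q" "i < n"
  shows "0 \<le> (\<integral>x. x \<partial>q i) \<and> (\<integral>x. x \<partial>q i) \<le> 1"
proof -
  interpret prob_space "q i"
    using assms by (simp add: is_bandit_def)
  have sets: "sets (q i) = sets borel" and "measure (q i) {0..1} = 1"
    using assms by (auto simp: is_bandit_def)
  then have AE: "AE x in q i. x \<in> {0..1}"
    using AE_in_set_eq_1[of "{0..1}"] by simp
  have "integrable (q i) (\<lambda>x. x)"
    using AE by (intro integrable_const_bound[where B = 1]) (auto simp: measurable_ident_sets[OF sets])
  then show ?thesis
    using AE integral_nonneg_AE[of "\<lambda>x. x" "q i"] integral_mono_AE[of "q i" "\<lambda>x. x" "\<lambda>_. 1"]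
    by (auto simp: prob_space)
qed

section \<open>A single test\<close>

abbreviation test_space :: "nat \<Rightarrow> (nat \<times> (nat \<Rightarrow> real)) measure" where
  "test_space m \<equiv> count_space UNIV \<Otimes>\<^sub>M PiM {..<m} (\<lambda>_. borel)"

lemma
  fixes q :: "nat \<Rightarrow> real measure"
  assumes n: "0 < n" and q: "is_bandit n q"
  shows prob_space_test_measure: "prob_space (test_measure n q m)"
    and sets_test_measure: "sets (test_measure n q m) = sets (test_space m)"
    and measure_test_measure: "X \<in> sets (test_space m) \<Longrightarrow> measure (test_measure n q m) X =
          (\<Sum>i<n. measure (PiM {..<m} (\<lambda>_. q i)) (Pair i -` X \<inter> space (PiM {..<m} (\<lambda>_. q i)))) / real n"
proof -
  define Q where "Q i = PiM {..<m} (\<lambda>_. q (if i < n then i else 0))" for i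
  define K where "K i = distr (Q i) (test_space m) (Pair i)" for i
  have Q: "prob_space (Q i)" "sets (Q i) = sets (PiM {..<m} (\<lambda>_. borel))" for i
    unfolding Q_def using q n by (auto simp: is_bandit_def intro!: prob_space_PiM sets_PiM_cong)
  have K: "prob_space (K i)" "sets (K i) = sets (test_space m)" for i
    unfolding K_def using Q[of i]
    by (auto intro!: prob_space.prob_space_distr simp: measurable_cong_sets[OF Q(2) refl])
  have K_kernel: "K \<in> measure_pmf (pmf_of_set {..<n}) \<rightarrow>\<^sub>M subprob_algebra (test_space m)"
    using K by (auto simp: space_subprob_algebra intro: prob_space_imp_subprob_space)
  have support: "set_pmf (pmf_of_set {..<n}) = {..<n}"
    using n by (subst set_pmf_of_set) auto
  \<comment> \<open>Clamping the arm index makes every kernel a probability measure; it changes nothing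
     on the support of the uniform choice of the arm.\<close>
  have T: "test_measure n q m = measure_pmf (pmf_of_set {..<n}) \<bind> K"
    unfolding test_measure_def K_def Q_def
    by (rule bind_measure_pmf_cong[where N = "test_space m"]) (use support in auto)
  show "prob_space (test_measure n q m)"
    unfolding T by (rule prob_space.prob_space_bind[OF prob_space_measure_pmf _ K_kernel]) (use K in auto)
  show "sets (test_measure n q m) = sets (test_space m)"
    unfolding T by (rule sets_bind) (use K in auto)
  assume X: "X \<in> sets (test_space m)"
  have "measure (test_measure n q m) X = (\<Sum>i<n. measure (K i) X) / n"
    unfolding T measure_pmf.measure_bind[OF K_kernel X] using n by (subst integral_pmf_of_set) auto
  also have "(\<Sum>i<n. measure (K i) X) =
      (\<Sum>i<n. measure (PiM {..<m} (\<lambda>_. q i)) (Pair i -` X \<inter> space (PiM {..<m} (\<lambda>_. q i))))"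
  proof (intro sum.cong refl)
    fix i assume "i \<in> {..<n}"
    then have "Q i = PiM {..<m} (\<lambda>_. q i)"
      by (simp add: Q_def)
    moreover have "measure (K i) X = measure (Q i) (Pair i -` X \<inter> space (Q i))"
      unfolding K_def by (rule measure_distr[OF _ X]) (simp add: measurable_cong_sets[OF Q(2) refl])
    ultimately show "measure (K i) X =
        measure (PiM {..<m} (\<lambda>_. q i)) (Pair i -` X \<inter> space (PiM {..<m} (\<lambda>_. q i)))"
      by simp
  qed
  finally show "measure (test_measure n q m) X =
      (\<Sum>i<n. measure (PiM {..<m} (\<lambda>_. q i)) (Pair i -` X \<inter> space (PiM {..<m} (\<lambda>_. q i)))) / real n" .
qed

definition test_passes :: "(nat \<Rightarrow> real) \<Rightarrow> real \<Rightarrow> nat \<Rightarrow> (nat \<times> (nat \<Rightarrow> real)) set" where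
  "test_passes ut thr m = {r \<in> space (test_space m). \<not> test_fails ut thr m r}"

lemma test_passes_in_sets: "test_passes ut thr m \<in> sets (test_space m)"
  unfolding test_passes_def test_fails_def by measurable

lemma measure_test_passes_le:
  fixes q :: "nat \<Rightarrow> real measure" and u ut :: "nat \<Rightarrow> real"
  assumes n: "0 < n" and q: "is_bandit n q" and u: "\<forall>i<n. u i = (\<integral>x. x \<partial>q i)"
    and m: "0 < m" and thr: "0 \<le> thr"
  defines "S \<equiv> {i \<in> {..<n}. 2 * thr < \<bar>u i - ut i\<bar>}"
  shows "measure (test_measure n q m) (test_passes ut thr m)
      \<le> 1 - real (card S) / real n * (1 - 2 * exp (- 2 * real m * thr\<^sup>2))"
proof -
  let ?P = "\<lambda>i. PiM {..<m} (\<lambda>_. q i)"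
  let ?\<delta> = "2 * exp (- 2 * real m * thr\<^sup>2)"
  have P: "prob_space (?P i)" "sets (?P i) = sets (PiM {..<m} (\<lambda>_. borel))" if "i < n" for i
    using q that by (auto simp: is_bandit_def intro!: prob_space_PiM sets_PiM_cong)
  have section_le: "measure (?P i) (Pair i -` test_passes ut thr m \<inter> space (?P i)) \<le> (if i \<in> S then ?\<delta> else 1)"
    if i: "i < n" for i
  proof (cases "i \<in> S")
    case True
    interpret prob_space "?P i"
      using P(1)[OF i] .
    let ?far = "{xs \<in> space (?P i). thr \<le> \<bar>(\<Sum>j<m. xs j) / real m - u i\<bar>}"
    have "Pair i -` test_passes ut thr m \<inter> space (?P i) \<subseteq> ?far"
      using True by (auto simp: S_def test_passes_def test_fails_def)
    moreover have "?far \<in> sets (?P i)"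
      unfolding sets_eq_imp_space_eq[OF P(2)[OF i]] P(2)[OF i] by measurable
    ultimately have "measure (?P i) (Pair i -` test_passes ut thr m \<inter> space (?P i)) \<le> measure (?P i) ?far"
      by (rule finite_measure_mono)
    also have "\<dots> \<le> ?\<delta>"
      using hoeffding_empirical_mean[of "q i" m thr] q i u m thr by (simp add: is_bandit_def)
    finally show ?thesis
      using True by simp
  qed (simp add: prob_space.prob_le_1[OF P(1)[OF i]])
  have "measure (test_measure n q m) (test_passes ut thr m)
      = (\<Sum>i<n. measure (?P i) (Pair i -` test_passes ut thr m \<inter> space (?P i))) / n"
    using n q test_passes_in_sets by (rule measure_test_measure)
  also have "\<dots> \<le> (\<Sum>i<n. if i \<in> S then ?\<delta> else 1) / n"
    using section_le by (intro divide_right_mono sum_mono) auto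
  also have "(\<Sum>i<n. if i \<in> S then ?\<delta> else 1) = n - card S * (1 - ?\<delta>)"
  proof -
    have "S \<subseteq> {..<n}"
      by (auto simp: S_def)
    then have "(\<Sum>i<n. if i \<in> S then ?\<delta> else 1) = card S * ?\<delta> + card ({..<n} - S)"
      by (simp add: sum.If_cases Int_absorb1 Diff_eq)
    also have "card ({..<n} - S) = n - card S"
      using \<open>S \<subseteq> {..<n}\<close> by (simp add: card_Diff_subset finite_subset)
    finally show ?thesis
      using card_mono[OF finite_lessThan \<open>S \<subseteq> {..<n}\<close>] by (simp add: of_nat_diff algebra_simps)
  qed
  finally show ?thesis
    using n by (simp add: diff_divide_distrib)
qed

section \<open>The verifier\<close>

lemma verifier_component_in_space:
  fixes q :: "nat \<Rightarrow> real measure"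
  assumes n: "0 < n" and q: "is_bandit n q"
    and "\<omega> \<in> space (verifier_measure n \<sigma> \<epsilon> q)" "(b, t) \<in> P1_tests n \<sigma> \<epsilon>"
  shows "\<omega> (b, t) \<in> space (test_space (P1_m n \<sigma> \<epsilon> b))"
  using assms(3,4) sets_eq_imp_space_eq[OF sets_test_measure[OF n q]]
  by (force simp: verifier_measure_def space_PiM)

lemma verifier_rejects_event_in_sets:
  fixes q :: "nat \<Rightarrow> real measure"
  assumes n: "0 < n" and q: "is_bandit n q"
  shows "verifier_rejects_event n \<sigma> \<epsilon> q ut \<in> sets (verifier_measure n \<sigma> \<epsilon> q)"
proof -
  let ?tests = "P1_tests n \<sigma> \<epsilon>"
  let ?M = "\<lambda>(b, t). test_measure n q (P1_m n \<sigma> \<epsilon> b)"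
  let ?fails = "\<lambda>(b, t). {r \<in> space (test_space (P1_m n \<sigma> \<epsilon> b)).
      test_fails ut (P1_eps \<epsilon> b / 8) (P1_m n \<sigma> \<epsilon> b) r}"
  have "?tests = Sigma (P1_B \<epsilon>) (\<lambda>b. {1..P1_a n \<sigma> \<epsilon> b})"
    by (auto simp: P1_tests_def)
  then have finite_tests: "finite ?tests"
    by (simp add: P1_B_def)
  have fails_sets: "?fails j \<in> sets (?M j)" for j
  proof -
    have "?fails j \<in> sets (test_space (P1_m n \<sigma> \<epsilon> (fst j)))"
      unfolding test_fails_def case_prod_beta by measurable
    then show ?thesis
      using sets_test_measure[OF n q] by (simp add: case_prod_beta)
  qed
  have rejects_eq: "verifier_rejects_event n \<sigma> \<epsilon> q ut
      = (\<Union>j\<in>?tests. (\<lambda>\<omega>. \<omega> j) -` ?fails j \<inter> space (verifier_measure n \<sigma> \<epsilon> q))"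
  proof (intro set_eqI iffI)
    fix \<omega> assume "\<omega> \<in> verifier_rejects_event n \<sigma> \<epsilon> q ut"
    then obtain b t where "\<omega> \<in> space (verifier_measure n \<sigma> \<epsilon> q)" "(b, t) \<in> ?tests"
        "test_fails ut (P1_eps \<epsilon> b / 8) (P1_m n \<sigma> \<epsilon> b) (\<omega> (b, t))"
      unfolding verifier_rejects_event_def by blast
    moreover from this have "\<omega> (b, t) \<in> ?fails (b, t)"
      using verifier_component_in_space[OF n q] by simp
    ultimately show "\<omega> \<in> (\<Union>j\<in>?tests. (\<lambda>\<omega>. \<omega> j) -` ?fails j \<inter> space (verifier_measure n \<sigma> \<epsilon> q))"
      by blast
  next
    fix \<omega> assume "\<omega> \<in> (\<Union>j\<in>?tests. (\<lambda>\<omega>. \<omega> j) -` ?fails j \<inter> space (verifier_measure n \<sigma> \<epsilon> q))"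
    then obtain b t where "\<omega> \<in> space (verifier_measure n \<sigma> \<epsilon> q)" "(b, t) \<in> ?tests" "\<omega> (b, t) \<in> ?fails (b, t)"
      by force
    then show "\<omega> \<in> verifier_rejects_event n \<sigma> \<epsilon> q ut"
      unfolding verifier_rejects_event_def by (auto intro!: bexI[of _ "(b, t)"])
  qed
  show ?thesis
    unfolding rejects_eq verifier_measure_def using finite_tests fails_sets
    by (intro sets.finite_UN measurable_sets[OF measurable_component_singleton]) auto
qed

lemma verifier_rejects_ge:
  fixes q :: "nat \<Rightarrow> real measure"
  assumes n: "0 < n" and q: "is_bandit n q" and b: "b \<in> P1_B \<epsilon>"
  shows "measure (verifier_measure n \<sigma> \<epsilon> q) (verifier_rejects_event n \<sigma> \<epsilon> q ut)
      \<ge> 1 - measure (test_measure n q (P1_m n \<sigma> \<epsilon> b))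
                 (test_passes ut (P1_eps \<epsilon> b / 8) (P1_m n \<sigma> \<epsilon> b)) ^ P1_a n \<sigma> \<epsilon> b"
proof -
  let ?tests = "P1_tests n \<sigma> \<epsilon>"
  let ?M = "\<lambda>(b, t). test_measure n q (P1_m n \<sigma> \<epsilon> b)"
  let ?R = "verifier_rejects_event n \<sigma> \<epsilon> q ut"
  let ?A = "test_passes ut (P1_eps \<epsilon> b / 8) (P1_m n \<sigma> \<epsilon> b)"
  define J where "J = {b} \<times> {1..P1_a n \<sigma> \<epsilon> b}"
  interpret V: product_prob_space ?M ?tests
    using prob_space_test_measure[OF n q] by (intro product_prob_spaceI) (simp add: case_prod_beta)
  have J: "finite J" "J \<subseteq> ?tests" "\<And>j. j \<in> J \<Longrightarrow> ?M j = test_measure n q (P1_m n \<sigma> \<epsilon> b)"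
    using b by (auto simp: J_def P1_tests_def)
  have A: "?A \<in> sets (test_measure n q (P1_m n \<sigma> \<epsilon> b))"
    using sets_test_measure[OF n q] test_passes_in_sets by simp
  have "\<omega> j \<in> ?A" if \<omega>: "\<omega> \<in> space (PiM ?tests ?M) - ?R" and j: "j \<in> J" for \<omega> j
  proof -
    obtain t where bt: "j = (b, t)" "(b, t) \<in> ?tests"
      using j J(2) by (auto simp: J_def)
    have "\<not> test_fails ut (P1_eps \<epsilon> b / 8) (P1_m n \<sigma> \<epsilon> b) (\<omega> (b, t))"
      using \<omega> bt(2) by (force simp: verifier_rejects_event_def verifier_measure_def)
    moreover have "\<omega> (b, t) \<in> space (test_space (P1_m n \<sigma> \<epsilon> b))"
      using \<omega> bt(2) verifier_component_in_space[OF n q] by (simp add: verifier_measure_def)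
    ultimately show ?thesis
      by (simp add: bt(1) test_passes_def)
  qed
  then have "space (PiM ?tests ?M) - ?R \<subseteq> {\<omega> \<in> space (PiM ?tests ?M). \<forall>j\<in>J. \<omega> j \<in> ?A}"
    by blast
  then have "V.prob (space (PiM ?tests ?M) - ?R) \<le> V.prob {\<omega> \<in> space (PiM ?tests ?M). \<forall>j\<in>J. \<omega> j \<in> ?A}"
    using V.all_components_in_sets[OF J A] by (rule V.finite_measure_mono)
  also have "\<dots> = measure (test_measure n q (P1_m n \<sigma> \<epsilon> b)) ?A ^ P1_a n \<sigma> \<epsilon> b"
    using V.prob_all_components_in[OF J A] by (simp add: J_def card_cartesian_product_singleton)
  finally show ?thesis
    using V.prob_compl verifier_rejects_event_in_sets[OF n q] by (simp add: verifier_measure_def)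
qed

section \<open>Levels of the gap\<close>

lemma abs_dotp_diff_le:
  assumes "\<And>i. i < n \<Longrightarrow> 0 \<le> \<pi> i"
  shows "\<bar>dotp n \<pi> u - dotp n \<pi> v\<bar> \<le> (\<Sum>i<n. \<pi> i * \<bar>u i - v i\<bar>)"
proof -
  have "\<bar>dotp n \<pi> u - dotp n \<pi> v\<bar> = \<bar>\<Sum>i<n. \<pi> i * (u i - v i)\<bar>"
    by (simp add: dotp_def sum_subtractf right_diff_distrib)
  also have "\<dots> \<le> (\<Sum>i<n. \<bar>\<pi> i * (u i - v i)\<bar>)"
    by (rule sum_abs)
  also have "\<dots> = (\<Sum>i<n. \<pi> i * \<bar>u i - v i\<bar>)"
    using assms by (intro sum.cong) (auto simp: abs_mult)
  finally show ?thesis .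
qed

lemma le_level_sum:
  fixes \<epsilon> d :: real and K :: nat
  assumes "0 < \<epsilon>" "0 \<le> d" "d \<le> \<epsilon> * 4 ^ K"
  shows "d \<le> \<epsilon> / 4 + (\<Sum>b\<le>K. if \<epsilon> * 4 ^ b / 4 < d then \<epsilon> * 4 ^ b else 0)"
  using assms(3)
proof (induction K)
  case 0
  then show ?case
    using assms(1) by (cases "\<epsilon> / 4 < d") auto
next
  case (Suc K)
  have "0 \<le> (\<Sum>b\<le>K. if \<epsilon> * 4 ^ b / 4 < d then \<epsilon> * 4 ^ b else (0::real))"
    using assms(1) by (intro sum_nonneg) auto
  then show ?case
    using Suc assms(1) by (cases "d \<le> \<epsilon> * 4 ^ K") auto
qed

lemma exists_heavy_level:
  fixes \<epsilon> \<sigma> L :: real and d \<pi> :: "nat \<Rightarrow> real" and K :: nat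
  assumes \<epsilon>: "0 < \<epsilon>" and \<sigma>: "0 < \<sigma>" and L: "real K + 1 \<le> L"
    and d: "\<And>i. i < n \<Longrightarrow> 0 \<le> d i \<and> d i \<le> \<epsilon> * 4 ^ K"
    and \<pi>: "\<And>i. i < n \<Longrightarrow> 0 \<le> \<pi> i \<and> \<pi> i \<le> \<sigma>" "(\<Sum>i<n. \<pi> i) = 1"
    and gap: "\<epsilon> / 2 \<le> (\<Sum>i<n. \<pi> i * d i)"
  shows "\<exists>b\<le>K. 1 / (4 ^ (b + 1) * \<sigma> * L) \<le> card {i \<in> {..<n}. \<epsilon> * 4 ^ b / 4 < d i}"
proof (rule ccontr)
  assume "\<not> ?thesis"
  then have light: "card {i \<in> {..<n}. \<epsilon> * 4 ^ b / 4 < d i} < 1 / (4 ^ (b + 1) * \<sigma> * L)"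
    if "b \<le> K" for b
    using that by force
  define T where "T b i = (if \<epsilon> * 4 ^ b / 4 < d i then \<epsilon> * 4 ^ b else (0::real))" for b i
  have level: "(\<Sum>i<n. \<pi> i * T b i) < \<epsilon> / (4 * L)" if "b \<le> K" for b
  proof -
    have "(\<Sum>i<n. \<pi> i * T b i) \<le> (\<Sum>i<n. \<sigma> * T b i)"
      using \<pi> \<epsilon> by (intro sum_mono mult_right_mono) (auto simp: T_def)
    also have "\<dots> = \<sigma> * \<epsilon> * 4 ^ b * card {i \<in> {..<n}. \<epsilon> * 4 ^ b / 4 < d i}"
      by (simp add: T_def sum.If_cases sum_distrib_left[symmetric] Int_def conj_commute)
    also have "\<dots> < \<sigma> * \<epsilon> * 4 ^ b * (1 / (4 ^ (b + 1) * \<sigma> * L))"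
      using light[OF that] \<sigma> \<epsilon> by (intro mult_strict_left_mono) auto
    also have "\<dots> = \<epsilon> / (4 * L)"
      using \<sigma> by (simp add: field_simps)
    finally show ?thesis .
  qed
  have "\<epsilon> / 2 \<le> (\<Sum>i<n. \<pi> i * (\<epsilon> / 4 + (\<Sum>b\<le>K. T b i)))"
    using gap d \<pi> le_level_sum[OF \<epsilon>]
    by (elim order.trans, intro sum_mono mult_left_mono) (auto simp: T_def)
  also have "\<dots> = (\<Sum>i<n. \<pi> i) * (\<epsilon> / 4) + (\<Sum>i<n. \<Sum>b\<le>K. \<pi> i * T b i)"
    by (simp add: distrib_left sum.distrib sum_distrib_left sum_distrib_right)
  also have "\<dots> = \<epsilon> / 4 + (\<Sum>b\<le>K. \<Sum>i<n. \<pi> i * T b i)"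
    using \<pi>(2) sum.swap by simp
  also have "\<dots> < \<epsilon> / 4 + (real K + 1) * (\<epsilon> / (4 * L))"
  proof -
    have "(\<Sum>b\<le>K. \<Sum>i<n. \<pi> i * T b i) < (\<Sum>b\<le>K. \<epsilon> / (4 * L))"
      by (rule sum_strict_mono) (auto intro: level)
    then show ?thesis
      by (simp add: add.commute)
  qed
  also have "\<dots> \<le> \<epsilon> / 4 + L * (\<epsilon> / (4 * L))"
    using L \<epsilon> by (intro add_left_mono mult_right_mono) auto
  also have "\<dots> = \<epsilon> / 2"
    using L by simp
  finally show False
    by simp
qed

section \<open>Parameters of Protocol 1\<close>

lemma power_le_exp_neg:
  fixes x c :: real
  assumes "0 \<le> x" "x \<le> 1 - c"
  shows "x ^ a \<le> exp (- (c * a))"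
proof -
  have "x ^ a \<le> exp (- c) ^ a"
    using assms exp_ge_add_one_self[of "- c"] by (intro power_mono) auto
  then show ?thesis
    by (simp add: exp_of_nat_mult[symmetric] mult.commute)
qed

lemma two_exp_neg_le_eighth:
  fixes x :: real
  assumes "4 \<le> x"
  shows "2 * exp (- x) \<le> 1 / 8"
proof -
  have "(2 :: real) ^ 4 \<le> exp 1 ^ 4"
    using exp_ge_add_one_self[of 1] by (intro power_mono) auto
  then have "16 \<le> exp (4 :: real)"
    by (simp add: exp_of_nat_mult[symmetric])
  also have "\<dots> \<le> exp x"
    using assms by simp
  finally show ?thesis
    by (simp add: exp_minus field_simps)
qed

lemma exp_neg_seven_eighths_ln_six_le: "exp (- (7 / 8 * ln 6)) \<le> (1 / 3 :: real)"
proof -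
  have "ln ((3 :: real) ^ 8) \<le> ln ((6 :: real) ^ 7)"
    by (subst ln_le_cancel_iff) auto
  then have "ln 3 \<le> 7 / 8 * ln (6 :: real)"
    by (simp only: ln_realpow)
  then have "exp (ln 3) \<le> exp (7 / 8 * ln (6 :: real))"
    by (simp only: exp_le_cancel_iff)
  then show ?thesis
    by (simp add: exp_minus inverse_eq_divide divide_le_eq)
qed

lemma P1_L_gt_two: "0 < \<epsilon> \<Longrightarrow> \<epsilon> < 1 \<Longrightarrow> 2 < P1_L \<epsilon>"
  by (simp add: P1_L_def)

lemma P1_a_ge: "4 ^ (b + 1) * real n * \<sigma> * P1_L \<epsilon> * ln 6 \<le> P1_a n \<sigma> \<epsilon> b"
  unfolding P1_a_def by (rule order.trans[OF _ real_nat_ceiling_ge]) (simp add: mult_ac)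

lemma P1_m_large:
  assumes "0 < n" "0 < \<sigma>" "0 < \<epsilon>" "\<epsilon> < 1"
  shows "0 < P1_m n \<sigma> \<epsilon> b" and "4 \<le> 2 * P1_m n \<sigma> \<epsilon> b * (P1_eps \<epsilon> b / 8)\<^sup>2"
proof -
  let ?L = "P1_L \<epsilon>" and ?a = "P1_a n \<sigma> \<epsilon> b" and ?m = "P1_m n \<sigma> \<epsilon> b" and ?e = "P1_eps \<epsilon> b"
  have L: "2 < ?L"
    using assms(3,4) by (rule P1_L_gt_two)
  then have "0 < 4 ^ (b + 1) * real n * \<sigma> * ?L * ln 6"
    using assms by simp
  then have "0 < real ?a"
    using P1_a_ge[of b n \<sigma> \<epsilon>] by linarith
  then have "1 \<le> real ?a"
    by simp
  then have "12 * 2 * 1 \<le> 12 * ?L * ?a"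
    using L by (intro mult_mono) auto
  then have "exp 1 \<le> 12 * ?L * ?a"
    using exp_le by linarith
  then have "1 \<le> ln (12 * ?L * ?a)"
    using ln_mono[OF _ exp_gt_zero, of 1] by simp
  moreover have "128 * ln (12 * ?L * ?a) / ?e\<^sup>2 \<le> ?m"
    unfolding P1_m_def by (rule real_nat_ceiling_ge)
  moreover have "0 < ?e"
    using assms by (simp add: P1_eps_def)
  ultimately have "128 \<le> ?m * ?e\<^sup>2"
    by (simp add: divide_le_eq)
  then show "0 < ?m"
    by (cases "?m = 0") simp_all
  show "4 \<le> 2 * ?m * (?e / 8)\<^sup>2"
    using \<open>128 \<le> ?m * ?e\<^sup>2\<close> by (simp add: power_divide)
qed

lemma P1_top_level:
  assumes "0 < \<epsilon>" "\<epsilon> < 1"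
  defines "K \<equiv> nat \<lceil>log 4 (1 / \<epsilon>)\<rceil>"
  shows "1 \<le> \<epsilon> * 4 ^ K" and "real K + 1 \<le> P1_L \<epsilon>"
proof -
  have "0 < log 4 (1 / \<epsilon>)"
    using assms by simp
  then have K: "real K = \<lceil>log 4 (1 / \<epsilon>)\<rceil>"
    by (simp add: K_def)
  have "1 / \<epsilon> = 4 powr log 4 (1 / \<epsilon>)"
    using assms by simp
  also have "\<dots> \<le> 4 powr real K"
    unfolding K by (intro powr_mono) auto
  also have "\<dots> = 4 ^ K"
    by (rule powr_realpow) simp
  finally show "1 \<le> \<epsilon> * 4 ^ K"
    using assms(1) by (simp only: divide_le_eq mult.commute)
  show "real K + 1 \<le> P1_L \<epsilon>"
    using of_int_ceiling_le_add_one[of "log 4 (1 / \<epsilon>)"] unfolding K P1_L_def by linarith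
qed

lemma exists_heavy_P1_level:
  fixes q :: "nat \<Rightarrow> real measure" and u ut \<pi> :: "nat \<Rightarrow> real"
  assumes \<sigma>: "0 < \<sigma>" and \<epsilon>: "0 < \<epsilon>" "\<epsilon> < 1"
    and q: "is_bandit n q" and u: "\<forall>i<n. u i = (\<integral>x. x \<partial>q i)" and ut: "\<forall>i<n. 0 \<le> ut i \<and> ut i \<le> 1"
    and \<pi>: "smooth_strategy n \<sigma> \<pi>" and gap: "\<epsilon> / 2 \<le> \<bar>dotp n \<pi> u - dotp n \<pi> ut\<bar>"
  shows "\<exists>b\<in>P1_B \<epsilon>. 1 / (4 ^ (b + 1) * \<sigma> * P1_L \<epsilon>) \<le> card {i \<in> {..<n}. \<epsilon> * 4 ^ b / 4 < \<bar>u i - ut i\<bar>}"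
proof -
  have \<pi>_bounds: "\<And>i. i < n \<Longrightarrow> 0 \<le> \<pi> i \<and> \<pi> i \<le> \<sigma>" and \<pi>_sum: "(\<Sum>i<n. \<pi> i) = 1"
    using \<pi> by (auto simp: smooth_strategy_def)
  define K where "K = nat \<lceil>log 4 (1 / \<epsilon>)\<rceil>"
  have K: "1 \<le> \<epsilon> * 4 ^ K" "real K + 1 \<le> P1_L \<epsilon>"
    using P1_top_level[OF \<epsilon>] by (simp_all add: K_def)
  have d: "0 \<le> \<bar>u i - ut i\<bar> \<and> \<bar>u i - ut i\<bar> \<le> \<epsilon> * 4 ^ K" if "i < n" for i
  proof -
    have "0 \<le> u i \<and> u i \<le> 1" "0 \<le> ut i \<and> ut i \<le> 1"
      using bandit_mean_in_unit[OF q that] u ut that by simp_all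
    then show ?thesis
      using K(1) by (simp add: abs_le_iff)
  qed
  have "\<bar>dotp n \<pi> u - dotp n \<pi> ut\<bar> \<le> (\<Sum>i<n. \<pi> i * \<bar>u i - ut i\<bar>)"
    using \<pi>_bounds by (intro abs_dotp_diff_le) simp
  then have weighted_gap: "\<epsilon> / 2 \<le> (\<Sum>i<n. \<pi> i * \<bar>u i - ut i\<bar>)"
    using gap by linarith
  obtain b where "b \<le> K"
      and heavy: "1 / (4 ^ (b + 1) * \<sigma> * P1_L \<epsilon>) \<le> card {i \<in> {..<n}. \<epsilon> * 4 ^ b / 4 < \<bar>u i - ut i\<bar>}"
    using exists_heavy_level[OF \<epsilon>(1) \<sigma> K(2) d \<pi>_bounds \<pi>_sum weighted_gap] by blast
  then have "b \<in> P1_B \<epsilon>"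
    by (simp add: P1_B_def K_def)
  then show ?thesis
    using heavy by (rule bexI[rotated])
qed

lemma verifier_rejects_of_heavy_level:
  fixes q :: "nat \<Rightarrow> real measure" and u ut :: "nat \<Rightarrow> real"
  assumes n: "0 < n" and \<sigma>: "0 < \<sigma>" and \<epsilon>: "0 < \<epsilon>" "\<epsilon> < 1"
    and q: "is_bandit n q" and u: "\<forall>i<n. u i = (\<integral>x. x \<partial>q i)" and b: "b \<in> P1_B \<epsilon>"
    and heavy: "1 / (4 ^ (b + 1) * \<sigma> * P1_L \<epsilon>) \<le> card {i \<in> {..<n}. \<epsilon> * 4 ^ b / 4 < \<bar>u i - ut i\<bar>}"
  shows "2 / 3 \<le> measure (verifier_measure n \<sigma> \<epsilon> q) (verifier_rejects_event n \<sigma> \<epsilon> q ut)"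
proof -
  define m where "m = P1_m n \<sigma> \<epsilon> b"
  define a where "a = P1_a n \<sigma> \<epsilon> b"
  define thr where "thr = P1_eps \<epsilon> b / 8"
  define \<delta> where "\<delta> = 2 * exp (- 2 * real m * thr\<^sup>2)"
  define p where "p = card {i \<in> {..<n}. 2 * thr < \<bar>u i - ut i\<bar>} / real n"
  have m: "0 < m" and "4 \<le> 2 * real m * thr\<^sup>2"
    unfolding m_def thr_def using P1_m_large[OF n \<sigma> \<epsilon>] by auto
  then have "\<delta> \<le> 1 / 8"
    using two_exp_neg_le_eighth[of "2 * real m * thr\<^sup>2"] by (simp add: \<delta>_def)
  have thr: "0 \<le> thr"
    using \<epsilon> by (simp add: thr_def P1_eps_def)
  have pass: "measure (test_measure n q m) (test_passes ut thr m) \<le> 1 - p * (1 - \<delta>)"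
    unfolding p_def \<delta>_def using measure_test_passes_le[OF n q u m thr] .
  have "ln 6 \<le> p * a"
  proof -
    have "1 \<le> card {i \<in> {..<n}. 2 * thr < \<bar>u i - ut i\<bar>} * (4 ^ (b + 1) * \<sigma> * P1_L \<epsilon>)"
      using heavy \<sigma> P1_L_gt_two[OF \<epsilon>] by (simp add: thr_def P1_eps_def divide_le_eq)
    then have "ln 6 \<le> p * (4 ^ (b + 1) * real n * \<sigma> * P1_L \<epsilon> * ln 6)"
      using n by (simp add: p_def field_simps)
    also have "\<dots> \<le> p * a"
      unfolding a_def by (rule mult_left_mono[OF P1_a_ge]) (simp add: p_def)
    finally show ?thesis .
  qed
  have "measure (test_measure n q m) (test_passes ut thr m) ^ a \<le> exp (- (p * (1 - \<delta>) * a))"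
    using pass by (rule power_le_exp_neg[OF measure_nonneg])
  also have "\<dots> \<le> exp (- (7 / 8 * ln 6))"
  proof -
    have "7 / 8 * ln 6 \<le> (1 - \<delta>) * ln 6"
      using \<open>\<delta> \<le> 1 / 8\<close> by (intro mult_right_mono) auto
    also have "\<dots> \<le> (1 - \<delta>) * (p * a)"
      using \<open>ln 6 \<le> p * a\<close> \<open>\<delta> \<le> 1 / 8\<close> by (intro mult_left_mono) auto
    finally show ?thesis
      by (simp add: mult_ac)
  qed
  also have "\<dots> \<le> 1 / 3"
    by (rule exp_neg_seven_eighths_ln_six_le)
  finally show ?thesis
    using verifier_rejects_ge[OF n q b, of \<sigma> ut] by (simp add: m_def a_def thr_def)
qed

theorem mainTheorem2:
  fixes n :: nat and \<sigma> \<epsilon> :: real and q :: "nat \<Rightarrow> real measure"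
    and u ut :: "nat \<Rightarrow> real"
  assumes "0 < n"
    and "1 / real n \<le> \<sigma>" and "\<sigma> \<le> 1"
    and "0 < \<epsilon>" and "\<epsilon> < 1"
    and "is_bandit n q"
    and "\<forall>i<n. u i = (\<integral>x. x \<partial>(q i))"
    and "\<forall>i<n. 0 \<le> ut i \<and> ut i \<le> 1"
    and "\<exists>\<pi>. smooth_strategy n \<sigma> \<pi> \<and> \<bar>dotp n \<pi> u - dotp n \<pi> ut\<bar> \<ge> \<epsilon> / 2"
  shows "measure (verifier_measure n \<sigma> \<epsilon> q) (verifier_rejects_event n \<sigma> \<epsilon> q ut) \<ge> 2 / 3"
proof -
  obtain \<pi> where \<pi>: "smooth_strategy n \<sigma> \<pi>" and gap: "\<epsilon> / 2 \<le> \<bar>dotp n \<pi> u - dotp n \<pi> ut\<bar>"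
    using assms(9) by blast
  have "0 < 1 / real n"
    using assms(1) by simp
  then have \<sigma>: "0 < \<sigma>"
    using assms(2) by linarith
  obtain b where "b \<in> P1_B \<epsilon>"
      and "1 / (4 ^ (b + 1) * \<sigma> * P1_L \<epsilon>) \<le> card {i \<in> {..<n}. \<epsilon> * 4 ^ b / 4 < \<bar>u i - ut i\<bar>}"
    using exists_heavy_P1_level[OF \<sigma> assms(4-8) \<pi> gap] by blast
  then show ?thesis
    using verifier_rejects_of_heavy_level[OF assms(1) \<sigma> assms(4-7)] by simp
qed

end
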